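(* Let $x \geq 1$ and $m \geq 2$ be integers. Let $\mathcal{C}_{m,x}$ be the set of binary words of length $m$ containing no pattern from $\mathcal{T}_x = \{0\mathbf{1}^y0,\ 1\mathbf{0}^y1 : 1\le y\le x\}$ as a contiguous substring, listed in increasing lexicographic order, and for $\mathbf{c} = [c_{m-1}\, c_{m-2} \dots c_0] \in \mathcal{C}_{m,x}$ (with $c_{m-1}$ the leftmost bit) let $g(\mathbf{c}) \in \{0,\dots,|\mathcal{C}_{m,x}|-1\}$ be its position in this list. Let $N(k,x) = |\mathcal{C}_{k,x}|$ for $k\ge 1$ and $N(k,x) \triangleq 2$ for all integers $k \le 1$. Then: if $c_{m-1}=0$, $$g(\mathbf{c}) = \frac12 \sum_{\substack{0\le i\le m-2\\ c_i=1}} N(i-x+1,x);$$ if $c_{m-1}=1$, $$g(\mathbf{c}) = \frac12\Big[N(m,x) + \sum_{\substack{0\le i\le m-2\\ c_i=1}} N(i-x+1,x)\Big].$$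
   Context: $\mathbf{0}^r$ (resp. $\mathbf{1}^r$) denotes a run of $r$ consecutive $0$'s (resp. $1$'s). Lexicographic order on binary words of a fixed length is the order as binary numbers with the leftmost bit most significant; positions are counted from $0$. *)

theory Defs
  imports Complex_Main "HOL-Library.Sublist"
begin

text \<open>Binary words are bool lists written left to right (head = leftmost bit,
  True = 1). For a word w of length m, the paper's bit c_i is w ! (m - 1 - i).\<close>

definition forbidden :: "nat \<Rightarrow> bool list set" where
  "forbidden x = {[False] @ replicate y True @ [False] | y. 1 \<le> y \<and> y \<le> x}
               \<union> {[True] @ replicate y False @ [True] | y. 1 \<le> y \<and> y \<le> x}"

definition codewords :: "nat \<Rightarrow> nat \<Rightarrow> bool list set" where
  "codewords m x = {w. length w = m \<and> (\<forall>p\<in>forbidden x. \<not> sublist p w)}"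

definition bval :: "bool list \<Rightarrow> nat" where
  "bval w = foldl (\<lambda>a b. 2 * a + (if b then 1 else 0)) 0 w"

text \<open>Position (from 0) of w in the lexicographically ordered list of codewords.\<close>
definition gpos :: "nat \<Rightarrow> nat \<Rightarrow> bool list \<Rightarrow> nat" where
  "gpos m x w = card {d \<in> codewords m x. bval d < bval w}"

definition Ncount :: "int \<Rightarrow> nat \<Rightarrow> nat" where
  "Ncount k x = (if k \<le> 1 then 2 else card (codewords (nat k) x))"

end

theory Submission
  imports Defs
begin

(* Write C_n for the codewords of length n. Complementing all bits maps C_n onto itself, so half
   of C_n starts with each bit. For a codeword b # u of length n + 1, the codewords below it that
   also start with b are the b # d with d < u in C_n such that b # d is still a codeword, i.e. d
   does not start with (not b)^y b for some 1 <= y <= x. These excluded words all lie below u if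
   hd u = 1 and all above u otherwise, while exactly N(n - x) / 2 words of C_n start with (not b)
   but avoid the pattern, namely those beginning with more than x copies of (not b). Hence 2 g(b # u) - [b] N(n + 1) exceeds 2 g(u) - [hd u] N(n)
   by exactly [hd u] N(n - x), and telescoping over the suffixes of c gives the formula.
   The argument never uses x >= 1. *)

lemma foldl_bval: "foldl (\<lambda>a b. 2 * a + (if b then 1 else 0)) a d = a * 2 ^ length d + bval d"
proof (induction d arbitrary: a)
  case (Cons c d)
  have "bval (c # d) = (if c then 1 else 0) * 2 ^ length d + bval d"
    using Cons[of "if c then 1 else 0"] by (simp add: bval_def)
  then show ?case
    using Cons[of "2 * a + (if c then 1 else 0)"] by (simp add: algebra_simps)
qed (simp add: bval_def)

lemma bval_append: "bval (p @ q) = bval p * 2 ^ length q + bval q"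
  by (simp add: bval_def foldl_bval[of "bval p" q, unfolded bval_def])

lemma bval_Cons: "bval (c # d) = (if c then 2 ^ length d else 0) + bval d"
  using bval_append[of "[c]" d] by (simp add: bval_def)

lemma bval_less_pow: "bval d < 2 ^ length d"
  by (induction d) (auto simp: bval_Cons, simp add: bval_def)

lemma bval_append_False_less_True:
  assumes "length s = length t"
  shows "bval (p @ False # s) < bval (p @ True # t)"
  using bval_less_pow[of s] assms by (simp add: bval_append bval_Cons)

lemma finite_codewords: "finite (codewords n x)"
proof (rule finite_subset)
  show "codewords n x \<subseteq> {w. set w \<subseteq> UNIV \<and> length w = n}"
    unfolding codewords_def by auto
qed (rule finite_lists_length_eq, simp)

lemma length_codewords: "d \<in> codewords n x \<Longrightarrow> length d = n"
  unfolding codewords_def by simp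

lemma forbidden_iff:
  "p \<in> forbidden x \<longleftrightarrow> (\<exists>y c. 1 \<le> y \<and> y \<le> x \<and> p = c # replicate y (\<not> c) @ [c])"
  unfolding forbidden_def by auto (metis (full_types))+

definition forbidden_start :: "nat \<Rightarrow> bool \<Rightarrow> bool list \<Rightarrow> bool" where
  "forbidden_start x b d \<longleftrightarrow> (\<exists>y. 1 \<le> y \<and> y \<le> x \<and> prefix (replicate y (\<not> b) @ [b]) d)"

lemma forbidden_start_hd: "forbidden_start x b d \<Longrightarrow> d \<noteq> [] \<and> hd d = (\<not> b)"
  unfolding forbidden_start_def prefix_def by (auto simp: Suc_le_eq neq0_conv)

lemma Cons_mem_codewords_iff:
  "b # d \<in> codewords (Suc n) x \<longleftrightarrow> d \<in> codewords n x \<and> \<not> forbidden_start x b d"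
proof -
  have "(\<exists>p\<in>forbidden x. prefix p (b # d)) \<longleftrightarrow> forbidden_start x b d"
  proof
    assume "\<exists>p\<in>forbidden x. prefix p (b # d)"
    then obtain p where "p \<in> forbidden x" and p: "prefix p (b # d)" by blast
    then obtain y c where y: "1 \<le> y" "y \<le> x" and "p = c # replicate y (\<not> c) @ [c]"
      unfolding forbidden_iff by blast
    with p have "c = b \<and> prefix (replicate y (\<not> c) @ [c]) d"
      by (simp only: append_Cons Cons_prefix_Cons) blast
    with y show "forbidden_start x b d"
      unfolding forbidden_start_def by blast
  next
    assume "forbidden_start x b d"
    then obtain y where "1 \<le> y" "y \<le> x" and pre: "prefix (replicate y (\<not> b) @ [b]) d"
      unfolding forbidden_start_def by blast
    then have "b # replicate y (\<not> b) @ [b] \<in> forbidden x"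
      unfolding forbidden_iff by blast
    moreover have "prefix (b # replicate y (\<not> b) @ [b]) (b # d)"
      using pre by simp
    ultimately show "\<exists>p\<in>forbidden x. prefix p (b # d)"
      by blast
  qed
  then show ?thesis
    unfolding codewords_def by (simp add: sublist_Cons_right ball_conj_distrib) blast
qed

lemma notin_set_replicate_Not: "b \<notin> set p \<Longrightarrow> p = replicate (length p) (\<not> b)"
  by (intro replicate_eqI) (simp, smt (verit))

lemma forbidden_start_iff_mem_take:
  assumes "d \<noteq> []" "hd d = (\<not> b)"
  shows "forbidden_start x b d \<longleftrightarrow> b \<in> set (take (Suc x) d)"
proof
  assume "forbidden_start x b d"
  then obtain y where "y \<le> x" and "prefix (replicate y (\<not> b) @ [b]) d"
    unfolding forbidden_start_def by blast
  then have "take (Suc y) d = replicate y (\<not> b) @ [b]"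
    by (auto simp: prefix_def)
  then show "b \<in> set (take (Suc x) d)"
    using set_take_subset_set_take[of "Suc y" "Suc x" d] \<open>y \<le> x\<close> by auto
next
  assume "b \<in> set (take (Suc x) d)"
  then obtain p s where ps: "take (Suc x) d = p @ b # s" "b \<notin> set p"
    using split_list_first by metis
  have "p \<noteq> []"
    using ps assms by (cases d) auto
  moreover have "length p \<le> x"
    using arg_cong[OF ps(1), of length] by simp
  moreover have "p = replicate (length p) (\<not> b)"
    using ps(2) by (rule notin_set_replicate_Not)
  moreover have "prefix (p @ [b]) d"
    using ps(1) take_is_prefix[of "Suc x" d] by (metis append.assoc append_Cons append_Nil prefix_def)
  ultimately show "forbidden_start x b d"
    unfolding forbidden_start_def by (metis One_nat_def Suc_leI length_greater_0_conv)
qed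

lemma forbidden_start_less_iff:
  assumes "length d = length u" "forbidden_start x b d" "u \<noteq> []" "\<not> forbidden_start x b u"
  shows "bval d < bval u \<longleftrightarrow> hd u"
proof -
  obtain y s where y: "1 \<le> y" "y \<le> x" and d: "d = replicate y (\<not> b) @ b # s"
    using assms(2) unfolding forbidden_start_def prefix_def by auto
  show ?thesis
  proof (cases "hd u = b")
    case True
    then obtain t where u: "u = b # t"
      using assms(3) by (cases u) auto
    define r where "r = replicate (y - 1) (\<not> b) @ b # s"
    have "d = (\<not> b) # r"
      using d y by (cases y) (auto simp: r_def)
    moreover have "length r = length t"
      using assms(1) u calculation by simp
    ultimately show ?thesis
      using bval_append_False_less_True[of r t "[]"] bval_append_False_less_True[of t r "[]"] u True
      by (cases b) auto
  next
    case False
    then have hd_u: "hd u = (\<not> b)" by simp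
    \<comment> \<open>\<open>u\<close> starts with a run of \<open>\<not> b\<close> longer than \<open>y\<close>, so \<open>d\<close> and \<open>u\<close> first differ
      at position \<open>y\<close>\<close>
    have "b \<notin> set (take (Suc y) u)"
      using forbidden_start_iff_mem_take[OF assms(3) hd_u] assms(4) y(2)
        set_take_subset_set_take[of "Suc y" "Suc x" u] by auto
    moreover have "length (take (Suc y) u) = Suc y"
      using assms(1) d by simp
    ultimately have "take (Suc y) u = replicate (Suc y) (\<not> b)"
      by (metis notin_set_replicate_Not)
    then have u: "u = replicate y (\<not> b) @ (\<not> b) # drop (Suc y) u"
      by (metis append_take_drop_id replicate_app_Cons_same replicate_Suc append_Cons)
    have "length (drop (Suc y) u) = length s"
      using assms(1) d by simp
    then show ?thesis
      using bval_append_False_less_True[of s "drop (Suc y) u" "replicate y (\<not> b)"]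
        bval_append_False_less_True[of "drop (Suc y) u" s "replicate y (\<not> b)"] d u hd_u
      by (cases b) auto
  qed
qed

lemma map_Not_mem_codewords:
  assumes "d \<in> codewords n x"
  shows "map Not d \<in> codewords n x"
  unfolding codewords_def
proof (intro CollectI conjI ballI notI)
  show "length (map Not d) = n"
    using assms by (simp add: length_codewords)
  fix p assume p: "p \<in> forbidden x" and "sublist p (map Not d)"
  then have "sublist (map Not p) d"
    using map_mono_sublist[of p "map Not d" Not] by (simp add: comp_def)
  moreover have "map Not p \<in> forbidden x"
    using p unfolding forbidden_iff by force
  ultimately show False
    using assms unfolding codewords_def by blast
qed

lemma card_codewords_hd:
  assumes "n \<ge> 1"
  shows "2 * card {d \<in> codewords n x. hd d = c} = card (codewords n x)"
proof -
  let ?A = "\<lambda>c. {d \<in> codewords n x. hd d = c}"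
  have image_sub: "map Not ` ?A c \<subseteq> ?A (\<not> c)" for c
  proof
    fix e assume "e \<in> map Not ` ?A c"
    then obtain d where "d \<in> codewords n x" "hd d = c" "e = map Not d"
      by blast
    moreover have "d \<noteq> []"
      using length_codewords[OF calculation(1)] assms by auto
    ultimately show "e \<in> ?A (\<not> c)"
      using map_Not_mem_codewords by (simp add: hd_map)
  qed
  have "bij_betw (map Not) (?A c) (?A (\<not> c))"
    using image_sub[of c] image_sub[of "\<not> c"] by (intro bij_betw_byWitness) (auto simp: comp_def)
  then have "card (?A c) = card (?A (\<not> c))"
    by (rule bij_betw_same_card)
  moreover have "codewords n x = ?A c \<union> ?A (\<not> c)" and "?A c \<inter> ?A (\<not> c) = {}"
    by auto
  ultimately show ?thesis
    using finite_codewords[of n x] card_Un_disjoint[of "?A c" "?A (\<not> c)"] by simp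
qed

lemma Nil_mem_codewords: "[] \<in> codewords 0 x"
proof -
  have "[] \<notin> forbidden x"
    unfolding forbidden_iff by simp
  then show ?thesis
    unfolding codewords_def by auto
qed

lemma codewords_one: "codewords 1 x = {[False], [True]}"
proof -
  have "[c] \<in> codewords 1 x" for c
    using Cons_mem_codewords_iff[of c "[]" 0 x] Nil_mem_codewords forbidden_start_hd by auto
  moreover have "d = [False] \<or> d = [True]" if "d \<in> codewords 1 x" for d
    using length_codewords[OF that] by (cases d) auto
  ultimately show ?thesis
    by auto
qed

lemma Ncount_eq_card: "n \<ge> 1 \<Longrightarrow> Ncount (int n) x = card (codewords n x)"
  unfolding Ncount_def using codewords_one[of x] by (cases "n = 1") auto

lemma replicate_append_mem_codewords_iff:
  assumes "e \<noteq> []" "hd e = c"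
  shows "replicate j c @ e \<in> codewords (j + k) x \<longleftrightarrow> e \<in> codewords k x"
proof (induction j)
  case (Suc j)
  have "\<not> forbidden_start x c (replicate j c @ e)"
    using forbidden_start_hd[of x c "replicate j c @ e"] assms by (cases j) auto
  then show ?case
    using Suc Cons_mem_codewords_iff[of c "replicate j c @ e" "j + k" x] by simp
qed simp

lemma replicate_mem_codewords:
  assumes "n \<ge> 1"
  shows "replicate n c \<in> codewords n x"
proof -
  obtain k where n: "n = k + 1"
    using assms by (metis add.commute le_Suc_ex)
  have "[c] \<in> codewords 1 x"
    unfolding codewords_one by (cases c) auto
  then have "replicate k c @ [c] \<in> codewords n x"
    using replicate_append_mem_codewords_iff[of "[c]" c k 1 x] n by simp
  then show ?thesis
    by (simp add: replicate_append_same n)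
qed

lemma hd_not_forbidden_start_iff:
  assumes "d \<noteq> []"
  shows "hd d = (\<not> b) \<and> \<not> forbidden_start x b d \<longleftrightarrow> b \<notin> set (take (Suc x) d)"
proof (cases "hd d = b")
  case True
  then show ?thesis
    using assms by (cases d) auto
next
  case False
  then show ?thesis
    using forbidden_start_iff_mem_take[OF assms, of b x] by simp
qed

lemma not_forbidden_start_short:
  assumes "1 \<le> n" "n \<le> x"
  shows "{d \<in> codewords n x. hd d = (\<not> b) \<and> \<not> forbidden_start x b d} = {replicate n (\<not> b)}"
proof (intro equalityI subsetI)
  fix d assume d: "d \<in> {d \<in> codewords n x. hd d = (\<not> b) \<and> \<not> forbidden_start x b d}"
  then have "length d = n" and "d \<noteq> []"
    using length_codewords assms by fastforce+
  with d assms(2) have "b \<notin> set d"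
    using hd_not_forbidden_start_iff[of d b x] by simp
  then show "d \<in> {replicate n (\<not> b)}"
    using notin_set_replicate_Not \<open>length d = n\<close> by fastforce
next
  fix d assume "d \<in> {replicate n (\<not> b)}"
  then have d: "d = replicate n (\<not> b)" by simp
  then have "d \<noteq> []" and "b \<notin> set (take (Suc x) d)"
    using assms by (simp_all add: take_replicate)
  then show "d \<in> {d \<in> codewords n x. hd d = (\<not> b) \<and> \<not> forbidden_start x b d}"
    using hd_not_forbidden_start_iff[of d b x] replicate_mem_codewords[OF assms(1)] d by blast
qed

lemma not_forbidden_start_long:
  assumes "k \<ge> 1"
  shows "{d \<in> codewords (x + k) x. hd d = (\<not> b) \<and> \<not> forbidden_start x b d}
           = (\<lambda>e. replicate x (\<not> b) @ e) ` {e \<in> codewords k x. hd e = (\<not> b)}"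
proof (intro equalityI subsetI)
  fix d assume d: "d \<in> {d \<in> codewords (x + k) x. hd d = (\<not> b) \<and> \<not> forbidden_start x b d}"
  then have len: "length d = x + k" and "d \<noteq> []"
    using length_codewords assms by fastforce+
  with d have "b \<notin> set (take (Suc x) d)"
    using hd_not_forbidden_start_iff[of d b x] by simp
  then have run: "take (Suc x) d = replicate (Suc x) (\<not> b)"
    using notin_set_replicate_Not[of b "take (Suc x) d"] len assms by simp
  define e where "e = drop x d"
  have de: "d = replicate x (\<not> b) @ e"
    using run unfolding e_def
    by (metis append_take_drop_id take_replicate min.absorb1 le_SucI order_refl take_take)
  have "d ! x = (\<not> b)"
    using arg_cong[OF run, of "\<lambda>l. l ! x"] by (simp del: replicate_Suc)
  then have "e \<noteq> []" "hd e = (\<not> b)"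
    using len assms unfolding e_def by (auto simp: hd_drop_conv_nth)
  then have "e \<in> codewords k x"
    using d de replicate_append_mem_codewords_iff[of e "\<not> b" x k x] by simp
  then show "d \<in> (\<lambda>e. replicate x (\<not> b) @ e) ` {e \<in> codewords k x. hd e = (\<not> b)}"
    using de \<open>hd e = (\<not> b)\<close> by blast
next
  fix d assume "d \<in> (\<lambda>e. replicate x (\<not> b) @ e) ` {e \<in> codewords k x. hd e = (\<not> b)}"
  then obtain e where e: "e \<in> codewords k x" "hd e = (\<not> b)" and de: "d = replicate x (\<not> b) @ e"
    by blast
  have "e \<noteq> []"
    using length_codewords[OF e(1)] assms by auto
  then have "d \<in> codewords (x + k) x" and "d \<noteq> []" and "b \<notin> set (take (Suc x) d)"
    using replicate_append_mem_codewords_iff[of e "\<not> b" x k x] e de by (cases e; simp)+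
  then show "d \<in> {d \<in> codewords (x + k) x. hd d = (\<not> b) \<and> \<not> forbidden_start x b d}"
    using hd_not_forbidden_start_iff[of d b x] by blast
qed

lemma card_forbidden_start:
  assumes "n \<ge> 1"
  shows "2 * card {d \<in> codewords n x. forbidden_start x b d} + Ncount (int n - int x) x
           = card (codewords n x)"
proof -
  let ?F = "{d \<in> codewords n x. forbidden_start x b d}"
  let ?G = "{d \<in> codewords n x. hd d = (\<not> b) \<and> \<not> forbidden_start x b d}"
  have "2 * card ?G = Ncount (int n - int x) x"
  proof (cases "n \<le> x")
    case True
    \<comment> \<open>a single word, matching the convention \<open>Ncount k x = 2\<close> for \<open>k \<le> 1\<close>\<close>
    then show ?thesis
      using not_forbidden_start_short[OF assms True] unfolding Ncount_def by simp
  next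
    case False
    define k where "k = n - x"
    then have k: "k \<ge> 1" "n = x + k"
      using False by auto
    have "inj (\<lambda>e. replicate x (\<not> b) @ e)"
      by (rule injI) simp
    then have "card ?G = card {e \<in> codewords k x. hd e = (\<not> b)}"
      unfolding k(2) not_forbidden_start_long[OF k(1)] by (simp add: card_image inj_on_subset)
    then show ?thesis
      using card_codewords_hd[OF k(1), of x "\<not> b"] Ncount_eq_card[OF k(1), of x] k(2) by simp
  qed
  moreover have "{d \<in> codewords n x. hd d = (\<not> b)} = ?F \<union> ?G" and "?F \<inter> ?G = {}"
    using forbidden_start_hd by blast+
  then have "card ?F + card ?G = card {d \<in> codewords n x. hd d = (\<not> b)}"
    using finite_codewords[of n x] by (simp add: card_Un_disjoint)
  ultimately show ?thesis
    using card_codewords_hd[OF assms, of x "\<not> b"] by simp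
qed

lemma bval_Cons_less_Cons_iff:
  assumes "length d = length u"
  shows "bval (c # d) < bval (b # u) \<longleftrightarrow> (c = b \<and> bval d < bval u) \<or> (\<not> c \<and> b)"
  using assms bval_less_pow[of d] bval_less_pow[of u] by (cases b; cases c) (auto simp: bval_Cons)

lemma codewords_less_Cons:
  assumes "length u = n"
  shows "{d \<in> codewords (Suc n) x. bval d < bval (b # u)}
           = {d \<in> codewords (Suc n) x. \<not> hd d \<and> b}
             \<union> Cons b ` {d \<in> codewords n x. \<not> forbidden_start x b d \<and> bval d < bval u}"
    (is "_ = ?P \<union> Cons b ` ?Q")
proof (intro equalityI subsetI)
  fix d assume d: "d \<in> {d \<in> codewords (Suc n) x. bval d < bval (b # u)}"
  then have "length d = Suc n"
    using length_codewords by blast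
  then obtain c d' where dd: "d = c # d'" and "length d' = n"
    by (cases d) auto
  then have "(c = b \<and> bval d' < bval u) \<or> (\<not> c \<and> b)"
    using d assms bval_Cons_less_Cons_iff[of d' u c b] by simp
  moreover have "d' \<in> codewords n x" "\<not> forbidden_start x c d'"
    using d dd Cons_mem_codewords_iff by simp_all
  ultimately show "d \<in> ?P \<union> Cons b ` ?Q"
    using d dd by auto
next
  fix d assume "d \<in> ?P \<union> Cons b ` ?Q"
  then show "d \<in> {d \<in> codewords (Suc n) x. bval d < bval (b # u)}"
  proof
    assume d: "d \<in> ?P"
    then have "length d = Suc n" "\<not> hd d"
      using length_codewords by blast+
    then obtain d' where "d = False # d'" "length d' = n"
      by (cases d) auto
    with d assms show ?thesis
      using bval_Cons_less_Cons_iff[of d' u False b] by simp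
  next
    assume "d \<in> Cons b ` ?Q"
    then obtain d' where "d = b # d'" and d': "d' \<in> ?Q"
      by blast
    moreover have "length d' = n"
      using d' length_codewords by blast
    ultimately show ?thesis
      using assms bval_Cons_less_Cons_iff[of d' u b b] Cons_mem_codewords_iff by simp
  qed
qed

lemma gpos_Cons:
  assumes "length u = n"
  shows "gpos (Suc n) x (b # u) = (if b then card {d \<in> codewords (Suc n) x. \<not> hd d} else 0)
           + card {d \<in> codewords n x. \<not> forbidden_start x b d \<and> bval d < bval u}"
proof -
  let ?P = "{d \<in> codewords (Suc n) x. \<not> hd d \<and> b}"
  let ?Q = "{d \<in> codewords n x. \<not> forbidden_start x b d \<and> bval d < bval u}"
  have "?P \<inter> Cons b ` ?Q = {}" and "finite ?P" and "finite (Cons b ` ?Q)"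
    using finite_codewords by auto
  then have "gpos (Suc n) x (b # u) = card ?P + card ?Q"
    unfolding gpos_def codewords_less_Cons[OF assms] by (simp add: card_Un_disjoint card_image)
  then show ?thesis
    by simp
qed

lemma card_not_forbidden_start_less:
  assumes "u \<in> codewords n x" "u \<noteq> []" "\<not> forbidden_start x b u"
  shows "card {d \<in> codewords n x. \<not> forbidden_start x b d \<and> bval d < bval u}
           + (if hd u then card {d \<in> codewords n x. forbidden_start x b d} else 0) = gpos n x u"
proof -
  have "{d \<in> codewords n x. forbidden_start x b d \<and> bval d < bval u}
        = {d \<in> codewords n x. forbidden_start x b d \<and> hd u}"
    using forbidden_start_less_iff[of _ u x b] assms length_codewords by blast
  moreover have "{d \<in> codewords n x. bval d < bval u}
        = {d \<in> codewords n x. \<not> forbidden_start x b d \<and> bval d < bval u}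
          \<union> {d \<in> codewords n x. forbidden_start x b d \<and> bval d < bval u}"
    by auto
  ultimately show ?thesis
    unfolding gpos_def using finite_codewords[of n x]
    by (simp add: card_Un_disjoint disjoint_iff)
qed

definition weight_sum :: "nat \<Rightarrow> bool list \<Rightarrow> nat" where
  "weight_sum x w =
     (\<Sum>i < length w - 1. if w ! (length w - 1 - i) then Ncount (int i - int x + 1) x else 0)"

lemma weight_sum_Cons:
  assumes "u \<noteq> []"
  shows "weight_sum x (b # u)
           = weight_sum x u + (if hd u then Ncount (int (length u) - int x) x else 0)"
proof -
  obtain k where k: "length u = Suc k"
    using assms by (cases u) auto
  let ?N = "\<lambda>i. Ncount (int i - int x + 1) x"
  have "weight_sum x (b # u) = (\<Sum>i<Suc k. if (b # u) ! (Suc k - i) then ?N i else 0)"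
    unfolding weight_sum_def by (simp only: k length_Cons diff_Suc_1)
  also have "\<dots> = (\<Sum>i<k. if u ! (k - i) then ?N i else 0) + (if hd u then ?N k else 0)"
    using assms by (simp add: Suc_diff_le hd_conv_nth)
  also have "(\<Sum>i<k. if u ! (k - i) then ?N i else 0) = weight_sum x u"
    unfolding weight_sum_def k by simp
  finally show ?thesis
    using k by (simp add: algebra_simps)
qed

lemma two_gpos_eq:
  assumes "w \<in> codewords (length w) x" "w \<noteq> []"
  shows "2 * gpos (length w) x w = (if hd w then card (codewords (length w) x) else 0) + weight_sum x w"
  using assms
proof (induction w)
  case (Cons b u)
  let ?n = "length u"
  let ?Q = "{d \<in> codewords ?n x. \<not> forbidden_start x b d \<and> bval d < bval u}"
  have u: "u \<in> codewords ?n x" "\<not> forbidden_start x b u"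
    using Cons.prems(1) Cons_mem_codewords_iff by simp_all
  have "2 * gpos (Suc ?n) x (b # u) = (if b then card (codewords (Suc ?n) x) else 0) + 2 * card ?Q"
    using gpos_Cons[of u ?n x b] card_codewords_hd[of "Suc ?n" x False] by simp
  moreover have "2 * card ?Q = weight_sum x (b # u)"
  proof (cases "u = []")
    case True
    then show ?thesis
      unfolding weight_sum_def by (simp add: bval_def)
  next
    case False
    then have n: "?n \<ge> 1"
      by (cases u) auto
    have "2 * card ?Q + (if hd u then 2 * card {d \<in> codewords ?n x. forbidden_start x b d} else 0)
          = (if hd u then card (codewords ?n x) else 0) + weight_sum x u"
      using card_not_forbidden_start_less[OF u(1) False u(2)] Cons.IH[OF u(1) False] by auto
    moreover note card_forbidden_start[OF n, of x b]
    ultimately show ?thesis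
      using weight_sum_Cons[OF False, of x b] by (cases "hd u") simp_all
  qed
  ultimately show ?case
    by simp
qed simp

theorem theorem2:
  fixes m x :: nat and w :: "bool list"
  assumes "x \<ge> 1" and "m \<ge> 2" and "w \<in> codewords m x"
  shows "(\<not> w ! 0 \<longrightarrow>
            real (gpos m x w) =
              (1/2) * (\<Sum>i\<in>{i. i \<le> m - 2 \<and> w ! (m - 1 - i)}.
                         real (Ncount (int i - int x + 1) x)))
       \<and> (w ! 0 \<longrightarrow>
            real (gpos m x w) =
              (1/2) * (real (Ncount (int m) x) +
                       (\<Sum>i\<in>{i. i \<le> m - 2 \<and> w ! (m - 1 - i)}.
                         real (Ncount (int i - int x + 1) x))))"
proof -
  have len: "length w = m"
    using assms(3) by (rule length_codewords)
  with assms(2) have "w \<noteq> []"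
    by auto
  then have "2 * gpos m x w = (if w ! 0 then Ncount (int m) x else 0) + weight_sum x w"
    using two_gpos_eq[of w x] assms(2,3) len Ncount_eq_card[of m x] by (simp add: hd_conv_nth)
  moreover have "weight_sum x w
      = (\<Sum>i\<in>{i. i \<le> m - 2 \<and> w ! (m - 1 - i)}. Ncount (int i - int x + 1) x)"
  proof -
    have indices: "{i. i \<le> m - 2 \<and> w ! (m - 1 - i)} = {i \<in> {..<m - 1}. w ! (m - 1 - i)}"
      using assms(2) by auto
    show ?thesis
      unfolding weight_sum_def len indices sum.inter_filter[OF finite_lessThan] ..
  qed
  ultimately show ?thesis
    by (auto simp: of_nat_sum[symmetric] simp del: of_nat_sum)
qed

end
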